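(* Let $\mathcal G$ be the class of all finite connected graphs, with the fixed class of epimorphisms between them being the confluent epimorphisms. Then $\mathcal G$ is a projective Fraïssé class.
   Context: A graph is a pair $A=(V(A),E(A))$ where $E(A)\subseteq V(A)^2$ is a reflexive and symmetric relation; elements of $E(A)$ are edges. A homomorphism $f\colon A\to B$ maps edges to edges; an epimorphism is a homomorphism that is surjective both on vertices and on edges; an isomorphism is an injective epimorphism. A subset $S\subseteq V(A)$ is disconnected if there are nonempty closed subsets $P,Q$ of $S$ with $P\cup Q=S$ such that $\langle a,b\rangle\notin E(A)$ whenever $a\in P$, $b\in Q$; otherwise $S$ is connected; $A$ is connected if $V(A)$ is. The component of $S$ containing $a$ is the union of all connected subsets of $S$ containing $a$. An epimorphism $f\colon A\to B$ is confluent if for every connected $Q\subseteq V(B)$ and every component $C$ of $f^{-1}(Q)$ we have $f(C)=Q$. A class $\mathcal F$ of finite graphs with a fixed class of epimorphisms between its members is a projective Fraïssé class if: (1) $\mathcal F$ contains only countably many members up to isomorphism; (2) the fixed epimorphisms are closed under composition and contain all identity maps; (3) for all $B,C\in\mathcal F$ there are $D\in\mathcal F$ and fixed epimorphisms $D\to B$, $D\to C$; (4) (projective amalgamation) for all $A,B,C\in\mathcal F$ and fixed epimorphisms $f\colon B\to A$, $g\colon C\to A$ there are $D\in\mathcal F$ and fixed epimorphisms $f_0\colon D\to B$, $g_0\colon D\to C$ with $f\circ f_0=g\circ g_0$. *)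

theory Defs
  imports Main "HOL-Library.Countable_Set"
begin

type_synonym 'a graph = "'a set \<times> ('a \<times> 'a) set"

definition gV :: "'a graph \<Rightarrow> 'a set" where "gV A = fst A"
definition gE :: "'a graph \<Rightarrow> ('a \<times> 'a) set" where "gE A = snd A"

definition is_graph :: "'a graph \<Rightarrow> bool" where
  "is_graph A \<longleftrightarrow> gE A \<subseteq> gV A \<times> gV A \<and> (\<forall>a\<in>gV A. (a, a) \<in> gE A)
     \<and> (\<forall>a b. (a, b) \<in> gE A \<longrightarrow> (b, a) \<in> gE A)"

definition homomorphism :: "'a graph \<Rightarrow> 'b graph \<Rightarrow> ('a \<Rightarrow> 'b) \<Rightarrow> bool" where
  "homomorphism A B f \<longleftrightarrow> f ` gV A \<subseteq> gV B \<and> (\<forall>(a, b)\<in>gE A. (f a, f b) \<in> gE B)"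

definition epimorphism :: "'a graph \<Rightarrow> 'b graph \<Rightarrow> ('a \<Rightarrow> 'b) \<Rightarrow> bool" where
  "epimorphism A B f \<longleftrightarrow> homomorphism A B f \<and> f ` gV A = gV B
     \<and> (\<lambda>(a, b). (f a, f b)) ` gE A = gE B"

definition isomorphism :: "'a graph \<Rightarrow> 'b graph \<Rightarrow> ('a \<Rightarrow> 'b) \<Rightarrow> bool" where
  "isomorphism A B f \<longleftrightarrow> epimorphism A B f \<and> inj_on f (gV A)"

text \<open>For finite graphs (discrete topology) every subset is closed.\<close>
definition connected_in :: "'a graph \<Rightarrow> 'a set \<Rightarrow> bool" where
  "connected_in A S \<longleftrightarrow> \<not> (\<exists>P Q. P \<noteq> {} \<and> Q \<noteq> {} \<and> P \<union> Q = S
       \<and> (\<forall>a\<in>P. \<forall>b\<in>Q. (a, b) \<notin> gE A))"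

definition graph_connected :: "'a graph \<Rightarrow> bool" where
  "graph_connected A \<longleftrightarrow> connected_in A (gV A)"

definition component_of :: "'a graph \<Rightarrow> 'a set \<Rightarrow> 'a \<Rightarrow> 'a set" where
  "component_of A S a = \<Union>{C. C \<subseteq> S \<and> connected_in A C \<and> a \<in> C}"

definition is_component :: "'a graph \<Rightarrow> 'a set \<Rightarrow> 'a set \<Rightarrow> bool" where
  "is_component A S C \<longleftrightarrow> (\<exists>a\<in>S. C = component_of A S a)"

definition confluent :: "'a graph \<Rightarrow> 'b graph \<Rightarrow> ('a \<Rightarrow> 'b) \<Rightarrow> bool" where
  "confluent A B f \<longleftrightarrow> epimorphism A B f \<and>
     (\<forall>Q. Q \<subseteq> gV B \<and> connected_in B Q \<longrightarrow>
        (\<forall>C. is_component A (gV A \<inter> f -` Q) C \<longrightarrow> f ` C = Q))"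

text \<open>Projective Fraisse class: K a class of finite graphs, Epi the fixed epimorphisms.
  Equality of composites is required on the vertex set of the domain.\<close>
definition projective_Fraisse_class ::
  "'a graph set \<Rightarrow> ('a graph \<Rightarrow> 'a graph \<Rightarrow> ('a \<Rightarrow> 'a) \<Rightarrow> bool) \<Rightarrow> bool" where
  "projective_Fraisse_class K Epi \<longleftrightarrow>
     (\<forall>A\<in>K. is_graph A \<and> finite (gV A)) \<and>
     (\<forall>A B f. Epi A B f \<longrightarrow> epimorphism A B f) \<and>
     (\<exists>S. countable S \<and> S \<subseteq> K \<and> (\<forall>A\<in>K. \<exists>B\<in>S. \<exists>h. isomorphism A B h)) \<and>
     (\<forall>A\<in>K. \<forall>B\<in>K. \<forall>C\<in>K. \<forall>f g. Epi A B f \<and> Epi B C g \<longrightarrow> Epi A C (g \<circ> f)) \<and>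
     (\<forall>A\<in>K. Epi A A id) \<and>
     (\<forall>B\<in>K. \<forall>C\<in>K. \<exists>D\<in>K. \<exists>f g. Epi D B f \<and> Epi D C g) \<and>
     (\<forall>A\<in>K. \<forall>B\<in>K. \<forall>C\<in>K. \<forall>f g. Epi B A f \<and> Epi C A g \<longrightarrow>
        (\<exists>D\<in>K. \<exists>f0 g0. Epi D B f0 \<and> Epi D C g0 \<and> (\<forall>x\<in>gV D. f (f0 x) = g (g0 x))))"

definition finite_connected_graphs :: "nat graph set" where
  "finite_connected_graphs = {A. is_graph A \<and> finite (gV A) \<and> gV A \<noteq> {} \<and> graph_connected A}"

end

theory Submission
  imports Defs
begin

text \<open>
  Composition and identities are routine; the content is amalgamation. Given confluent
  f : B \<rightarrow> A and g : C \<rightarrow> A, let P be the pullback of B and C over A (pairs (b, c) with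
  f b = g c, adjacent when both coordinates are) and let D be a connected component of P.
  The projection D \<rightarrow> B is confluent because every edge b b' of B lifts to a connected set of D
  through any vertex (b, c) of D: if f b \<noteq> f b', confluence of g yields a connected K \<ni> c
  in C mapping onto the edge {f b, f b'}, and x \<mapsto> (b or b' according to g x, x) carries K
  into D. Such an edge lifting forces every component of the preimage of a connected set Q
  to map onto Q. Joint embedding is amalgamation over the one-point graph.
\<close>

section \<open>Connected sets and components\<close>

lemma gV_pair [simp]: "gV (V, E) = V"
  by (simp add: gV_def)

lemma gE_pair [simp]: "gE (V, E) = E"
  by (simp add: gE_def)

definition induced_subgraph :: "'a graph \<Rightarrow> 'a set \<Rightarrow> 'a graph" where
  "induced_subgraph A S = (S, gE A \<inter> S \<times> S)"

lemma gV_induced_subgraph [simp]: "gV (induced_subgraph A S) = S"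
  and gE_induced_subgraph [simp]: "gE (induced_subgraph A S) = gE A \<inter> S \<times> S"
  by (simp_all add: induced_subgraph_def)

lemma is_graph_induced_subgraph: "is_graph A \<Longrightarrow> S \<subseteq> gV A \<Longrightarrow> is_graph (induced_subgraph A S)"
  unfolding is_graph_def by auto

lemma graph_edge_sym: "is_graph A \<Longrightarrow> (x, y) \<in> gE A \<Longrightarrow> (y, x) \<in> gE A"
  and graph_edge_refl: "is_graph A \<Longrightarrow> x \<in> gV A \<Longrightarrow> (x, x) \<in> gE A"
  and graph_edge_vertices: "is_graph A \<Longrightarrow> (x, y) \<in> gE A \<Longrightarrow> x \<in> gV A \<and> y \<in> gV A"
  unfolding is_graph_def by auto

lemma connected_in_crossing_edge:
  "connected_in A S \<Longrightarrow> P \<noteq> {} \<Longrightarrow> Q \<noteq> {} \<Longrightarrow> P \<union> Q = S \<Longrightarrow> \<exists>a\<in>P. \<exists>b\<in>Q. (a, b) \<in> gE A"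
  unfolding connected_in_def by blast

lemma connected_in_cong:
  assumes "\<And>x y. x \<in> S \<Longrightarrow> y \<in> S \<Longrightarrow> (x, y) \<in> gE A \<longleftrightarrow> (x, y) \<in> gE B"
  shows "connected_in A S \<longleftrightarrow> connected_in B S"
proof -
  have "P \<union> Q = S \<and> (\<forall>a\<in>P. \<forall>b\<in>Q. (a, b) \<notin> gE A) \<longleftrightarrow>
        P \<union> Q = S \<and> (\<forall>a\<in>P. \<forall>b\<in>Q. (a, b) \<notin> gE B)" for P Q
    using assms by auto
  then show ?thesis
    unfolding connected_in_def by (simp only: conj_assoc[symmetric])
qed

lemma connected_in_induced_subgraph:
  assumes "T \<subseteq> S"
  shows "connected_in (induced_subgraph A S) T \<longleftrightarrow> connected_in A T"
  using assms by (intro connected_in_cong) auto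

lemma connected_in_edge:
  assumes "is_graph A" and "(a, b) \<in> gE A"
  shows "connected_in A {a, b}"
proof -
  have "(x, y) \<in> gE A" if "x \<in> {a, b}" and "y \<in> {a, b}" for x y
    using that assms(2) graph_edge_sym[OF assms] graph_edge_vertices[OF assms]
      graph_edge_refl[OF assms(1)] by auto
  then show ?thesis
    unfolding connected_in_def by (metis UnCI all_not_in_conv)
qed

lemma connected_in_singleton: "is_graph A \<Longrightarrow> a \<in> gV A \<Longrightarrow> connected_in A {a}"
  using connected_in_edge[OF _ graph_edge_refl] by (metis insert_absorb2)

lemma connected_in_Union:
  assumes "\<And>C. C \<in> F \<Longrightarrow> connected_in A C" and "\<And>C. C \<in> F \<Longrightarrow> x \<in> C"
  shows "connected_in A (\<Union>F)"
  unfolding connected_in_def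
proof clarify
  fix P Q assume PQ: "P \<noteq> {}" "Q \<noteq> {}" "P \<union> Q = \<Union>F" "\<forall>a\<in>P. \<forall>b\<in>Q. (a, b) \<notin> gE A"
  have one_side: "C \<inter> P = {} \<or> C \<inter> Q = {}" if "C \<in> F" for C
  proof (rule ccontr)
    assume "\<not> (C \<inter> P = {} \<or> C \<inter> Q = {})"
    moreover have "(C \<inter> P) \<union> (C \<inter> Q) = C"
      using PQ(3) that by blast
    ultimately obtain a b where "a \<in> P" "b \<in> Q" "(a, b) \<in> gE A"
      using connected_in_crossing_edge[OF assms(1)[OF \<open>C \<in> F\<close>], of "C \<inter> P" "C \<inter> Q"] by auto
    then show False
      using PQ(4) by blast
  qed
  obtain p q where "p \<in> P" "q \<in> Q"
    using PQ by blast
  then obtain Cp Cq where "Cp \<in> F" "p \<in> Cp" "Cq \<in> F" "q \<in> Cq"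
    using PQ(3) by blast
  moreover have "x \<in> P \<union> Q"
    using PQ(3) assms(2) \<open>Cp \<in> F\<close> by blast
  ultimately show False
  proof (elim UnE)
    assume "x \<in> P"
    then show False
      using one_side[OF \<open>Cq \<in> F\<close>] assms(2) \<open>Cq \<in> F\<close> \<open>q \<in> Cq\<close> \<open>q \<in> Q\<close> by blast
  next
    assume "x \<in> Q"
    then show False
      using one_side[OF \<open>Cp \<in> F\<close>] assms(2) \<open>Cp \<in> F\<close> \<open>p \<in> Cp\<close> \<open>p \<in> P\<close> by blast
  qed
qed

lemma connected_in_image:
  assumes "connected_in A S"
    and "\<And>x y. x \<in> S \<Longrightarrow> y \<in> S \<Longrightarrow> (x, y) \<in> gE A \<Longrightarrow> (h x, h y) \<in> gE B"
  shows "connected_in B (h ` S)"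
  unfolding connected_in_def
proof clarify
  fix P Q assume PQ: "P \<noteq> {}" "Q \<noteq> {}" "P \<union> Q = h ` S" "\<forall>a\<in>P. \<forall>b\<in>Q. (a, b) \<notin> gE B"
  obtain p q where "p \<in> P" "q \<in> Q"
    using PQ(1,2) by blast
  then obtain x y where "x \<in> S" "h x = p" "y \<in> S" "h y = q"
    using PQ(3) by (metis UnCI imageE)
  then have "S \<inter> h -` P \<noteq> {}" "S \<inter> h -` Q \<noteq> {}"
    using \<open>p \<in> P\<close> \<open>q \<in> Q\<close> by auto
  moreover have "(S \<inter> h -` P) \<union> (S \<inter> h -` Q) = S"
    using PQ(3) by auto
  ultimately obtain x y where "x \<in> S \<inter> h -` P" "y \<in> S \<inter> h -` Q" "(x, y) \<in> gE A"
    using connected_in_crossing_edge[OF assms(1)] by metis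
  then show False
    using assms(2) PQ(4) by blast
qed

lemma connected_in_homomorphic_image:
  "homomorphism A B h \<Longrightarrow> connected_in A S \<Longrightarrow> connected_in B (h ` S)"
  unfolding homomorphism_def by (erule conjE, rule connected_in_image) auto

lemma component_of_subset: "component_of A S a \<subseteq> S"
  unfolding component_of_def by blast

lemma connected_component_of: "connected_in A (component_of A S a)"
  unfolding component_of_def by (rule connected_in_Union) auto

lemma component_of_maximal:
  "connected_in A T \<Longrightarrow> T \<subseteq> S \<Longrightarrow> a \<in> T \<Longrightarrow> T \<subseteq> component_of A S a"
  unfolding component_of_def by blast

lemma mem_component_of: "is_graph A \<Longrightarrow> a \<in> S \<Longrightarrow> a \<in> gV A \<Longrightarrow> a \<in> component_of A S a"
  using component_of_maximal[OF connected_in_singleton, of A a S a] by simp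

lemma component_of_absorb:
  assumes "connected_in A T" "T \<subseteq> S" "x \<in> T" "x \<in> component_of A S a"
  shows "T \<subseteq> component_of A S a"
proof -
  have "a \<in> component_of A S a"
    using assms(4) unfolding component_of_def by blast
  moreover have "connected_in A (\<Union>{T, component_of A S a})"
    using assms(1,3,4) connected_component_of[of A S a]
    by (intro connected_in_Union[where x = x]) auto
  ultimately have "\<Union>{T, component_of A S a} \<subseteq> component_of A S a"
    using assms(2) component_of_subset[of A S a] by (intro component_of_maximal) auto
  then show ?thesis
    by simp
qed

lemma component_of_connected_eq: "connected_in A Q \<Longrightarrow> a \<in> Q \<Longrightarrow> component_of A Q a = Q"
  using component_of_maximal component_of_subset by (metis subset_antisym subset_refl)

definition component_graph :: "'a graph \<Rightarrow> 'a \<Rightarrow> 'a graph" where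
  "component_graph A a = induced_subgraph A (component_of A (gV A) a)"

lemma gV_component_graph: "gV (component_graph A a) = component_of A (gV A) a"
  by (simp add: component_graph_def)

lemma is_graph_component_graph: "is_graph A \<Longrightarrow> is_graph (component_graph A a)"
  unfolding component_graph_def by (intro is_graph_induced_subgraph component_of_subset)

lemma graph_connected_component_graph: "graph_connected (component_graph A a)"
  unfolding graph_connected_def component_graph_def
  by (simp add: connected_in_induced_subgraph connected_component_of)

lemma mem_component_graph: "is_graph A \<Longrightarrow> a \<in> gV A \<Longrightarrow> a \<in> gV (component_graph A a)"
  unfolding gV_component_graph by (rule mem_component_of)

lemma homomorphism_component_graph:
  "homomorphism A B h \<Longrightarrow> homomorphism (component_graph A a) B h"
  unfolding homomorphism_def component_graph_def using component_of_subset[of A "gV A" a] by auto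

section \<open>Confluent epimorphisms\<close>

lemma epimorphism_iff_images:
  "epimorphism A B f \<longleftrightarrow> f ` gV A = gV B \<and> (\<lambda>(a, b). (f a, f b)) ` gE A = gE B"
  unfolding epimorphism_def homomorphism_def by auto

lemma isomorphism_id: "isomorphism A A id"
  unfolding isomorphism_def epimorphism_iff_images by (simp add: case_prod_beta)

lemma epimorphism_comp:
  assumes "epimorphism A B f" "epimorphism B C g"
  shows "epimorphism A C (g \<circ> f)"
proof -
  have pairs: "(\<lambda>(a, b). ((g \<circ> f) a, (g \<circ> f) b)) = (\<lambda>(a, b). (g a, g b)) \<circ> (\<lambda>(a, b). (f a, f b))"
    by auto
  show ?thesis
    using assms unfolding epimorphism_iff_images pairs image_comp[symmetric] by simp
qed

lemma confluent_image_component_of: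
  assumes "confluent A B f" "Q \<subseteq> gV B" "connected_in B Q" "a \<in> gV A" "f a \<in> Q"
  shows "f ` component_of A (gV A \<inter> f -` Q) a = Q"
proof -
  have "is_component A (gV A \<inter> f -` Q) (component_of A (gV A \<inter> f -` Q) a)"
    unfolding is_component_def using assms(4,5) by (intro bexI[of _ a]) auto
  with assms(1-3) show ?thesis
    unfolding confluent_def by meson
qed

lemma confluent_comp:
  assumes "is_graph A" "is_graph B" and f: "confluent A B f" and g: "confluent B C g"
  shows "confluent A C (g \<circ> f)"
  unfolding confluent_def
proof (intro conjI allI impI)
  have "epimorphism A B f" "epimorphism B C g"
    using f g by (simp_all add: confluent_def)
  then show "epimorphism A C (g \<circ> f)"
    by (rule epimorphism_comp)
  have hom_f: "homomorphism A B f"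
    using \<open>epimorphism A B f\<close> by (simp add: epimorphism_def)
  fix Q K
  assume Q: "Q \<subseteq> gV C \<and> connected_in C Q" and "is_component A (gV A \<inter> (g \<circ> f) -` Q) K"
  then obtain a where a: "a \<in> gV A" "g (f a) \<in> Q"
    and K: "K = component_of A (gV A \<inter> (g \<circ> f) -` Q) a"
    unfolding is_component_def by auto
  \<comment> \<open>K is also the component of a over L, the component of f a over Q\<close>
  define L where "L = component_of B (gV B \<inter> g -` Q) (f a)"
  have fa: "f a \<in> gV B"
    using hom_f a(1) unfolding homomorphism_def by blast
  have L_sub: "L \<subseteq> gV B \<inter> g -` Q"
    unfolding L_def by (rule component_of_subset)
  have K_sub: "K \<subseteq> gV A \<inter> (g \<circ> f) -` Q"
    unfolding K by (rule component_of_subset)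
  have aK: "a \<in> K"
    unfolding K using a by (intro mem_component_of[OF assms(1)]) auto
  have "f ` K \<subseteq> L"
    unfolding L_def
  proof (rule component_of_maximal)
    show "connected_in B (f ` K)"
      unfolding K using hom_f connected_component_of by (rule connected_in_homomorphic_image)
    show "f ` K \<subseteq> gV B \<inter> g -` Q"
      using K_sub hom_f unfolding homomorphism_def by auto
    show "f a \<in> f ` K"
      using aK by simp
  qed
  have "component_of A (gV A \<inter> f -` L) a = K"
  proof (rule subset_antisym)
    show "component_of A (gV A \<inter> f -` L) a \<subseteq> K"
      unfolding K using L_sub component_of_subset[of A "gV A \<inter> f -` L" a] a
        mem_component_of[OF assms(2)] fa mem_component_of[OF assms(1)]
      by (intro component_of_maximal connected_component_of) (auto simp: L_def)
    show "K \<subseteq> component_of A (gV A \<inter> f -` L) a"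
      using \<open>f ` K \<subseteq> L\<close> K_sub aK connected_component_of[of A]
      unfolding K by (intro component_of_maximal) auto
  qed
  moreover have "f ` component_of A (gV A \<inter> f -` L) a = L"
    using f L_sub connected_component_of[of B] a mem_component_of[OF assms(2)] fa
    by (intro confluent_image_component_of) (auto simp: L_def)
  moreover have "g ` L = Q"
    using g Q fa a unfolding L_def by (intro confluent_image_component_of) auto
  ultimately show "(g \<circ> f) ` K = Q"
    by (metis image_comp)
qed

lemma confluent_id: "confluent A A id"
  unfolding confluent_def
proof (intro conjI allI impI)
  show "epimorphism A A id"
    unfolding epimorphism_iff_images by (simp add: case_prod_beta)
  fix Q K assume Q: "Q \<subseteq> gV A \<and> connected_in A Q" and "is_component A (gV A \<inter> id -` Q) K"
  moreover have "gV A \<inter> id -` Q = Q"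
    using Q by auto
  ultimately obtain a where "a \<in> Q" "K = component_of A Q a"
    unfolding is_component_def by auto
  then show "id ` K = Q"
    using component_of_connected_eq[of A Q a] Q by simp
qed

lemma confluent_const_singleton:
  assumes "is_graph D" "gV D \<noteq> {}"
  shows "confluent D ({c}, {(c, c)}) (\<lambda>_. c)"
  unfolding confluent_def
proof (intro conjI allI impI)
  obtain x where "x \<in> gV D"
    using assms(2) by blast
  then have "(x, x) \<in> gE D"
    by (rule graph_edge_refl[OF assms(1)])
  then show "epimorphism D ({c}, {(c, c)}) (\<lambda>_. c)"
    unfolding epimorphism_iff_images using assms(2) by auto
  fix Q K
  assume Q: "Q \<subseteq> gV ({c}, {(c, c)}) \<and> connected_in ({c}, {(c, c)}) Q"
    and "is_component D (gV D \<inter> (\<lambda>_. c) -` Q) K"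
  then obtain a where a: "a \<in> gV D" "c \<in> Q" and K: "K = component_of D (gV D \<inter> (\<lambda>_. c) -` Q) a"
    unfolding is_component_def by (auto split: if_splits)
  then have "a \<in> K"
    using mem_component_of[OF assms(1)] by simp
  then show "(\<lambda>_. c) ` K = Q"
    using Q a(2) by auto
qed

lemma confluent_lift_edge:
  assumes "is_graph A" "is_graph C" "confluent C A g" "(a, a') \<in> gE A" "c \<in> gV C" "g c = a"
  shows "\<exists>K\<subseteq>gV C. connected_in C K \<and> c \<in> K \<and> g ` K = {a, a'}"
proof -
  let ?K = "component_of C (gV C \<inter> g -` {a, a'}) c"
  have "g ` ?K = {a, a'}"
    using assms(3,5,6) connected_in_edge[OF assms(1,4)] graph_edge_vertices[OF assms(1,4)]
    by (intro confluent_image_component_of) auto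
  moreover have "c \<in> ?K"
    using assms(5,6) by (intro mem_component_of[OF assms(2)]) auto
  moreover have "?K \<subseteq> gV C"
    using component_of_subset[of C "gV C \<inter> g -` {a, a'}" c] by blast
  ultimately show ?thesis
    using connected_component_of[of C] by blast
qed

definition edge_lifting :: "'a graph \<Rightarrow> 'b graph \<Rightarrow> ('a \<Rightarrow> 'b) \<Rightarrow> bool" where
  "edge_lifting D B p \<longleftrightarrow>
     (\<forall>z\<in>gV D. \<forall>b. (p z, b) \<in> gE B \<longrightarrow>
        (\<exists>T\<subseteq>gV D. connected_in D T \<and> z \<in> T \<and> p ` T \<subseteq> {p z, b} \<and> b \<in> p ` T))"

lemma edge_liftingD:
  "edge_lifting D B p \<Longrightarrow> z \<in> gV D \<Longrightarrow> (p z, b) \<in> gE B \<Longrightarrow>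
    \<exists>T\<subseteq>gV D. connected_in D T \<and> z \<in> T \<and> p ` T \<subseteq> {p z, b} \<and> b \<in> p ` T"
  unfolding edge_lifting_def by blast

lemma image_component_of_if_edge_lifting:
  assumes "is_graph D" "edge_lifting D B p" "connected_in B Q" "y \<in> gV D" "p y \<in> Q"
  shows "p ` component_of D (gV D \<inter> p -` Q) y = Q" (is "p ` ?K = Q")
  \<comment> \<open>an edge of Q leaving p ` ?K lifts to a connected set meeting ?K, hence inside ?K\<close>
proof (rule ccontr)
  have K_sub: "?K \<subseteq> gV D \<inter> p -` Q"
    by (rule component_of_subset)
  have "y \<in> ?K"
    using assms(4,5) by (intro mem_component_of[OF assms(1)]) auto
  then have "Q \<inter> p ` ?K \<noteq> {}"
    using assms(5) by auto
  moreover assume "p ` ?K \<noteq> Q"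
  with K_sub have "Q - p ` ?K \<noteq> {}"
    by auto
  moreover have "(Q \<inter> p ` ?K) \<union> (Q - p ` ?K) = Q"
    by auto
  ultimately obtain b b' where b: "b \<in> Q \<inter> p ` ?K" and b': "b' \<in> Q - p ` ?K" and "(b, b') \<in> gE B"
    using connected_in_crossing_edge[OF assms(3)] by metis
  then obtain z where z: "z \<in> ?K" "p z = b"
    by auto
  moreover from z K_sub have "z \<in> gV D"
    by blast
  ultimately obtain T
    where T: "T \<subseteq> gV D" "connected_in D T" "z \<in> T" "p ` T \<subseteq> {b, b'}" "b' \<in> p ` T"
    using edge_liftingD[OF assms(2)] \<open>(b, b') \<in> gE B\<close> by metis
  have "T \<subseteq> gV D \<inter> p -` Q"
    using T(1,4) b b' by auto
  with T(2,3) z(1) have "T \<subseteq> ?K"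
    by (intro component_of_absorb)
  then show False
    using T(5) b' by auto
qed

lemma confluent_if_edge_lifting:
  assumes D: "is_graph D" "gV D \<noteq> {}" and B: "is_graph B" "graph_connected B"
    and hom: "homomorphism D B p" and lift: "edge_lifting D B p"
  shows "confluent D B p"
  unfolding confluent_def
proof (intro conjI allI impI)
  have vertices: "p ` gV D = gV B"
  proof
    show "p ` gV D \<subseteq> gV B"
      using hom unfolding homomorphism_def by blast
    obtain y where "y \<in> gV D"
      using D(2) by blast
    with hom B(2) have "p ` component_of D (gV D \<inter> p -` gV B) y = gV B"
      unfolding graph_connected_def homomorphism_def
      by (intro image_component_of_if_edge_lifting[OF D(1) lift]) auto
    then show "gV B \<subseteq> p ` gV D"
      using component_of_subset[of D "gV D \<inter> p -` gV B" y] by (metis image_mono le_infE)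
  qed
  have "(\<lambda>(a, b). (p a, p b)) ` gE D = gE B"
  proof
    show "(\<lambda>(a, b). (p a, p b)) ` gE D \<subseteq> gE B"
      using hom unfolding homomorphism_def by auto
    show "gE B \<subseteq> (\<lambda>(a, b). (p a, p b)) ` gE D"
    proof clarify
      fix b b' assume bb': "(b, b') \<in> gE B"
      then obtain z where z: "z \<in> gV D" "p z = b"
        using vertices graph_edge_vertices[OF B(1)] by (metis imageE)
      with bb' obtain T where T: "connected_in D T" "z \<in> T" "p ` T \<subseteq> {b, b'}" "b' \<in> p ` T"
        using edge_liftingD[OF lift] by metis
      \<comment> \<open>for b = b' the two parts coincide, which the definition of connectedness allows\<close>
      have "T \<inter> p -` {b} \<noteq> {}" "T \<inter> p -` {b'} \<noteq> {}" "(T \<inter> p -` {b}) \<union> (T \<inter> p -` {b'}) = T"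
        using T(2-4) z(2) by auto
      then obtain u w where "u \<in> T \<inter> p -` {b}" "w \<in> T \<inter> p -` {b'}" "(u, w) \<in> gE D"
        using connected_in_crossing_edge[OF T(1)] by metis
      then show "(b, b') \<in> (\<lambda>(a, b). (p a, p b)) ` gE D"
        by force
    qed
  qed
  with vertices show "epimorphism D B p"
    unfolding epimorphism_iff_images by simp
  fix Q K assume "Q \<subseteq> gV B \<and> connected_in B Q" "is_component D (gV D \<inter> p -` Q) K"
  then show "p ` K = Q"
    using image_component_of_if_edge_lifting[OF D(1) lift] unfolding is_component_def by auto
qed

section \<open>Pullbacks\<close>

text \<open>The pair (b, c) is encoded as e b c, so that the pullback of graphs on nat is again a
  graph on nat, and exchanging the two factors only exchanges the arguments of e.\<close>

definition pullback ::
  "'b graph \<Rightarrow> 'c graph \<Rightarrow> ('b \<Rightarrow> 'a) \<Rightarrow> ('c \<Rightarrow> 'a) \<Rightarrow> ('b \<Rightarrow> 'c \<Rightarrow> 'd) \<Rightarrow> 'd graph" where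
  "pullback B C f g e =
     ({e b c | b c. b \<in> gV B \<and> c \<in> gV C \<and> f b = g c},
      {(e b c, e b' c') | b c b' c'. (b, b') \<in> gE B \<and> (c, c') \<in> gE C \<and> f b = g c \<and> f b' = g c'})"

lemma mem_gV_pullback:
  "x \<in> gV (pullback B C f g e) \<longleftrightarrow> (\<exists>b c. x = e b c \<and> b \<in> gV B \<and> c \<in> gV C \<and> f b = g c)"
  by (simp add: pullback_def)

lemma mem_gE_pullback:
  "(x, y) \<in> gE (pullback B C f g e) \<longleftrightarrow>
    (\<exists>b c b' c'. x = e b c \<and> y = e b' c' \<and> (b, b') \<in> gE B \<and> (c, c') \<in> gE C
      \<and> f b = g c \<and> f b' = g c')"
  by (simp add: pullback_def)

lemma pullback_swap: "pullback C B g f (\<lambda>c b. e b c) = pullback B C f g e"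
  unfolding pullback_def prod.inject by (intro conjI; fastforce)

lemma is_graph_pullback:
  assumes "is_graph B" "is_graph C"
  shows "is_graph (pullback B C f g e)"
  using graph_edge_vertices[OF assms(1)] graph_edge_vertices[OF assms(2)]
    graph_edge_refl[OF assms(1)] graph_edge_refl[OF assms(2)]
    graph_edge_sym[OF assms(1)] graph_edge_sym[OF assms(2)]
  unfolding is_graph_def pullback_def by fastforce

lemma finite_gV_pullback:
  assumes "finite (gV B)" "finite (gV C)"
  shows "finite (gV (pullback B C f g e))"
proof (rule finite_subset)
  show "gV (pullback B C f g e) \<subseteq> case_prod e ` (gV B \<times> gV C)"
    unfolding pullback_def by auto
  show "finite (case_prod e ` (gV B \<times> gV C))"
    using assms by simp
qed

lemma homomorphism_pullback_proj:
  "(\<And>b c. pr (e b c) = b) \<Longrightarrow> homomorphism (pullback B C f g e) B pr"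
  unfolding homomorphism_def pullback_def by auto

context
  fixes A :: "'a graph" and B :: "'b graph" and C :: "'c graph"
    and f :: "'b \<Rightarrow> 'a" and g :: "'c \<Rightarrow> 'a" and e :: "'b \<Rightarrow> 'c \<Rightarrow> 'd" and pr :: "'d \<Rightarrow> 'b"
  assumes graph_A: "is_graph A" and graph_B: "is_graph B" and graph_C: "is_graph C"
    and hom_f: "homomorphism B A f" and confluent_g: "confluent C A g"
    and pr_e: "\<And>b c. pr (e b c) = b"
begin

lemma pullback_lift_edge:
  assumes bc: "b \<in> gV B" "c \<in> gV C" "f b = g c" and bb': "(b, b') \<in> gE B"
  shows "\<exists>T\<subseteq>gV (pullback B C f g e). connected_in (pullback B C f g e) T \<and> e b c \<in> T
           \<and> pr ` T \<subseteq> {b, b'} \<and> b' \<in> pr ` T"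
proof (cases "f b = f b'")
  case True
  have graph_P: "is_graph (pullback B C f g e)"
    by (rule is_graph_pullback[OF graph_B graph_C])
  have edge: "(e b c, e b' c) \<in> gE (pullback B C f g e)"
    using bb' bc True graph_edge_refl[OF graph_C bc(2)] unfolding mem_gE_pullback by metis
  show ?thesis
    using connected_in_edge[OF graph_P edge] graph_edge_vertices[OF graph_P edge] pr_e
    by (intro exI[of _ "{e b c, e b' c}"]) auto
next
  case False
  have "(f b, f b') \<in> gE A"
    using hom_f bb' unfolding homomorphism_def by auto
  from confluent_lift_edge[OF graph_A graph_C confluent_g this bc(2) bc(3)[symmetric]]
  obtain K where K: "K \<subseteq> gV C" "connected_in C K" "c \<in> K" "g ` K = {f b, f b'}"
    by (elim exE conjE)
  define side where "side x = (if g x = f b then b else b')" for x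
  have side: "side x \<in> {b, b'}" "f (side x) = g x" if "x \<in> K" for x
    using that K(4) unfolding side_def by auto
  have "(e (side x) x, e (side y) y) \<in> gE (pullback B C f g e)"
    if "x \<in> K" "y \<in> K" "(x, y) \<in> gE C" for x y
  proof -
    have "(side x, side y) \<in> gE B"
      using side(1)[OF that(1)] side(1)[OF that(2)] bb' graph_edge_sym[OF graph_B bb']
        graph_edge_refl[OF graph_B] bc(1) graph_edge_vertices[OF graph_B bb'] by auto
    then show ?thesis
      unfolding mem_gE_pullback using that(3) side(2)[OF that(1)] side(2)[OF that(2)] by blast
  qed
  then have "connected_in (pullback B C f g e) ((\<lambda>x. e (side x) x) ` K)"
    by (intro connected_in_image[OF K(2)])
  moreover have "(\<lambda>x. e (side x) x) ` K \<subseteq> gV (pullback B C f g e)"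
  proof (rule image_subsetI)
    fix x assume "x \<in> K"
    then have "side x \<in> gV B" "x \<in> gV C"
      using side(1) K(1) bc(1) graph_edge_vertices[OF graph_B bb'] by auto
    then show "e (side x) x \<in> gV (pullback B C f g e)"
      unfolding mem_gV_pullback using side(2)[OF \<open>x \<in> K\<close>] by blast
  qed
  moreover have "e b c \<in> (\<lambda>x. e (side x) x) ` K"
    using K(3) bc(3) unfolding side_def by force
  moreover have "pr ` (\<lambda>x. e (side x) x) ` K \<subseteq> {b, b'}"
    using side(1) by (auto simp: pr_e image_subset_iff)
  moreover have "b' \<in> pr ` (\<lambda>x. e (side x) x) ` K"
  proof -
    obtain x where "x \<in> K" "g x = f b'"
      using K(4) by (metis imageE insertCI)
    then show ?thesis
      using False unfolding side_def by (force simp: pr_e)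
  qed
  ultimately show ?thesis
    by blast
qed

lemma edge_lifting_pullback_component:
  "edge_lifting (component_graph (pullback B C f g e) v) B pr"
  unfolding edge_lifting_def
proof (intro ballI allI impI)
  let ?P = "pullback B C f g e"
  let ?K = "component_of ?P (gV ?P) v"
  fix z b' assume "z \<in> gV (component_graph ?P v)" "(pr z, b') \<in> gE B"
  then have z: "z \<in> ?K" "(pr z, b') \<in> gE B"
    by (simp_all add: gV_component_graph)
  have "z \<in> gV ?P"
    using z(1) component_of_subset[of ?P "gV ?P" v] by blast
  then obtain b c where "z = e b c" "b \<in> gV B" "c \<in> gV C" "f b = g c"
    unfolding mem_gV_pullback by blast
  moreover from this have "pr z = b"
    by (simp add: pr_e)
  ultimately obtain T where T: "T \<subseteq> gV ?P" "connected_in ?P T" "z \<in> T"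
    "pr ` T \<subseteq> {pr z, b'}" "b' \<in> pr ` T"
    using pullback_lift_edge z(2) by metis
  have "T \<subseteq> ?K"
    using T(2,1,3) z(1) by (rule component_of_absorb)
  then show "\<exists>T\<subseteq>gV (component_graph ?P v). connected_in (component_graph ?P v) T \<and> z \<in> T
      \<and> pr ` T \<subseteq> {pr z, b'} \<and> b' \<in> pr ` T"
    using T unfolding component_graph_def by (auto simp: connected_in_induced_subgraph)
qed

lemma confluent_pullback_component:
  assumes "graph_connected B" "v \<in> gV (pullback B C f g e)"
  shows "confluent (component_graph (pullback B C f g e) v) B pr"
proof (rule confluent_if_edge_lifting)
  have graph_P: "is_graph (pullback B C f g e)"
    by (rule is_graph_pullback[OF graph_B graph_C])
  then show "is_graph (component_graph (pullback B C f g e) v)"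
    by (rule is_graph_component_graph)
  show "gV (component_graph (pullback B C f g e) v) \<noteq> {}"
    using mem_component_graph[OF graph_P assms(2)] by blast
  show "homomorphism (component_graph (pullback B C f g e) v) B pr"
    by (intro homomorphism_component_graph homomorphism_pullback_proj pr_e)
qed (use graph_B assms(1) edge_lifting_pullback_component in auto)

end

section \<open>Finite connected graphs\<close>

lemma singleton_graph_in_finite_connected_graphs: "({n}, {(n, n)}) \<in> finite_connected_graphs"
proof -
  have "is_graph ({n}, {(n, n)})"
    unfolding is_graph_def by simp
  moreover from this have "connected_in ({n}, {(n, n)}) {n}"
    by (rule connected_in_singleton) simp
  ultimately show ?thesis
    unfolding finite_connected_graphs_def graph_connected_def by simp
qed

lemma countable_finite_connected_graphs: "countable finite_connected_graphs"
proof (rule countable_subset)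
  show "finite_connected_graphs \<subseteq> Collect finite \<times> Collect finite"
  proof
    fix G assume "G \<in> finite_connected_graphs"
    then have "finite (gV G)" "gE G \<subseteq> gV G \<times> gV G"
      unfolding finite_connected_graphs_def is_graph_def by auto
    then show "G \<in> Collect finite \<times> Collect finite"
      unfolding gV_def gE_def mem_Times_iff by (simp add: finite_subset)
  qed
  show "countable (Collect finite \<times> Collect finite :: (nat set \<times> (nat \<times> nat) set) set)"
    by (intro countable_SIGMA countable_Collect_finite)
qed

lemma confluent_amalgamation:
  assumes "A \<in> finite_connected_graphs" "B \<in> finite_connected_graphs" "C \<in> finite_connected_graphs"
    and f: "confluent B A f" and g: "confluent C A g"
  shows "\<exists>D\<in>finite_connected_graphs. \<exists>f0 g0.
           confluent D B f0 \<and> confluent D C g0 \<and> (\<forall>x\<in>gV D. f (f0 x) = g (g0 x))"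
proof -
  have graphs: "is_graph A" "is_graph B" "is_graph C"
    and finite_BC: "finite (gV B)" "finite (gV C)"
    and connected: "graph_connected B" "graph_connected C" and "gV A \<noteq> {}"
    using assms(1-3) unfolding finite_connected_graphs_def by auto
  have "f ` gV B = gV A" "g ` gV C = gV A" "homomorphism B A f" "homomorphism C A g"
    using f g unfolding confluent_def epimorphism_def by auto
  define e :: "nat \<Rightarrow> nat \<Rightarrow> nat" where "e b c = prod_encode (b, c)" for b c
  let ?P = "pullback B C f g e"
  obtain v where v: "v \<in> gV ?P"
  proof -
    obtain b c where "b \<in> gV B" "c \<in> gV C" "f b = g c"
      using \<open>gV A \<noteq> {}\<close> \<open>f ` gV B = gV A\<close> \<open>g ` gV C = gV A\<close> by (metis ex_in_conv imageE)
    then show thesis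
      using that unfolding mem_gV_pullback by blast
  qed
  define D where "D = component_graph ?P v"
  have fst_e: "(fst \<circ> prod_decode) (e b c) = b" and snd_e: "(snd \<circ> prod_decode) (e b c) = c" for b c
    by (simp_all add: e_def)
  have "confluent D B (fst \<circ> prod_decode)"
    unfolding D_def
    by (rule confluent_pullback_component[where e = e and pr = "fst \<circ> prod_decode",
          OF graphs \<open>homomorphism B A f\<close> g fst_e connected(1) v])
  moreover have "confluent D C (snd \<circ> prod_decode)"
    unfolding D_def pullback_swap[of C B g f e, symmetric]
    by (rule confluent_pullback_component[where e = "\<lambda>c b. e b c" and pr = "snd \<circ> prod_decode",
          OF graphs(1,3,2) \<open>homomorphism C A g\<close> f snd_e connected(2)])
      (unfold pullback_swap[of C B g f e], rule v)
  moreover have "f ((fst \<circ> prod_decode) x) = g ((snd \<circ> prod_decode) x)" if "x \<in> gV D" for x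
  proof -
    have "x \<in> gV ?P"
      using that component_of_subset[of ?P "gV ?P" v] unfolding D_def gV_component_graph by blast
    then obtain b c where "x = e b c" "f b = g c"
      unfolding mem_gV_pullback by blast
    then show ?thesis
      by (simp only: fst_e snd_e)
  qed
  moreover have "D \<in> finite_connected_graphs"
  proof -
    have "is_graph ?P" "finite (gV ?P)"
      using graphs finite_BC by (simp_all add: is_graph_pullback finite_gV_pullback)
    then have "is_graph D" "v \<in> gV D" "finite (gV D)"
      unfolding D_def using is_graph_component_graph[of ?P] mem_component_graph[of ?P] v
        component_of_subset[of ?P "gV ?P" v]
      by (auto simp: gV_component_graph intro: finite_subset)
    then show ?thesis
      unfolding finite_connected_graphs_def D_def
      using graph_connected_component_graph[of ?P v] by auto
  qed
  ultimately show ?thesis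
    by blast
qed

lemma confluent_joint_embedding:
  assumes "B \<in> finite_connected_graphs" "C \<in> finite_connected_graphs"
  shows "\<exists>D\<in>finite_connected_graphs. \<exists>f g. confluent D B f \<and> confluent D C g"
proof -
  have "confluent B ({0}, {(0, 0)}) (\<lambda>_. 0)" "confluent C ({0}, {(0, 0)}) (\<lambda>_. 0)"
    using assms unfolding finite_connected_graphs_def by (simp_all add: confluent_const_singleton)
  then show ?thesis
    using confluent_amalgamation[OF singleton_graph_in_finite_connected_graphs assms] by blast
qed

theorem mainTheorem1:
  shows "projective_Fraisse_class finite_connected_graphs (\<lambda>A B f. confluent A B f)"
  unfolding projective_Fraisse_class_def
proof (intro conjI ballI allI impI)
  show "\<exists>S. countable S \<and> S \<subseteq> finite_connected_graphs \<and>
      (\<forall>A\<in>finite_connected_graphs. \<exists>B\<in>S. \<exists>h. isomorphism A B h)"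
    using countable_finite_connected_graphs isomorphism_id by blast
  show "\<exists>D\<in>finite_connected_graphs. \<exists>f g. confluent D B f \<and> confluent D C g"
    if "B \<in> finite_connected_graphs" "C \<in> finite_connected_graphs" for B C
    using that by (rule confluent_joint_embedding)
next
  fix A B C f g
  assume "A \<in> finite_connected_graphs" "B \<in> finite_connected_graphs" "C \<in> finite_connected_graphs"
  then show "confluent B A f \<and> confluent C A g \<Longrightarrow> \<exists>D\<in>finite_connected_graphs. \<exists>f0 g0.
      confluent D B f0 \<and> confluent D C g0 \<and> (\<forall>x\<in>gV D. f (f0 x) = g (g0 x))"
    using confluent_amalgamation by blast
  show "confluent A B f \<and> confluent B C g \<Longrightarrow> confluent A C (g \<circ> f)"
    using \<open>A \<in> finite_connected_graphs\<close> \<open>B \<in> finite_connected_graphs\<close>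
    unfolding finite_connected_graphs_def by (auto intro: confluent_comp)
next
  fix A assume "A \<in> finite_connected_graphs"
  then show "is_graph A" "finite (gV A)" "confluent A A id"
    unfolding finite_connected_graphs_def by (simp_all add: confluent_id)
qed (simp add: confluent_def)

end
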